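(* Let $\mathcal V$ be a finite set, $2\le k\le|\mathcal V|-2$, let $\Gamma\subset\binom{\mathcal V}{k}$ be a code and let $G\le{\rm Aut}(\Gamma)\cap{\rm Sym}(\mathcal V)$. (a) $\Gamma$ is $G$-strongly incidence-transitive if and only if $\Gamma$ is $G$-incidence-transitive and $\delta(\Gamma)\ge2$. (b) If $\delta(\Gamma)\ge3$ and $\Gamma$ is $G$-neighbour-transitive, then $\Gamma$ is $G$-strongly incidence-transitive. (c) If $G$ is primitive on $\mathcal V$ and $\Gamma$ is $G$-strongly incidence-transitive, then $G$ is $2$-transitive on $\mathcal V$.
   Context: The Johnson graph $J(v,k)$ ($v=|\mathcal V|$) has vertex set $\binom{\mathcal V}{k}$, the $k$-subsets of $\mathcal V$, two being adjacent iff they meet in $k-1$ points; $d$ denotes graph distance. A code is a proper non-empty subset $\Gamma\subset\binom{\mathcal V}{k}$; $\delta(\Gamma)$ is the least distance in $J(v,k)$ between distinct codewords. The neighbour set $\Gamma_1$ is the set of $k$-subsets not in $\Gamma$ at distance $1$ from some codeword. ${\rm Aut}(\Gamma)$ is the setwise stabiliser of $\Gamma$ in ${\rm Aut}(J(v,k))$. For $\alpha\subseteq\mathcal V$, $\overline\alpha=\mathcal V\setminus\alpha$. For $G\le{\rm Aut}(\Gamma)$: $\Gamma$ is $G$-neighbour-transitive if $G$ is transitive on both $\Gamma$ and $\Gamma_1$; $\Gamma$ is $G$-incidence-transitive if $G$ is transitive on the set of pairs $(\gamma,\gamma_1)\in\Gamma\times\Gamma_1$ with $d(\gamma,\gamma_1)=1$.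 For $G\le{\rm Aut}(\Gamma)\cap{\rm Sym}(\mathcal V)$, $\Gamma$ is $G$-strongly incidence-transitive if $G$ is transitive on $\Gamma$ and, for $\gamma\in\Gamma$, the stabiliser $G_\gamma$ is transitive on $\gamma\times\overline\gamma$. *)

theory Defs
  imports "HOL-Algebra.Bij" "HOL-Library.Extended_Nat"
begin

definition ksubsets :: "'a set \<Rightarrow> nat \<Rightarrow> 'a set set" where
  "ksubsets V k = {A. A \<subseteq> V \<and> card A = k}"

definition johnson_edges :: "'a set \<Rightarrow> nat \<Rightarrow> ('a set \<times> 'a set) set" where
  "johnson_edges V k = {(A, B). A \<in> ksubsets V k \<and> B \<in> ksubsets V k \<and> card (A \<inter> B) = k - 1}"

definition jdist :: "'a set \<Rightarrow> nat \<Rightarrow> 'a set \<Rightarrow> 'a set \<Rightarrow> nat" where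
  "jdist V k A B = (LEAST n. (A, B) \<in> (johnson_edges V k) ^^ n)"

definition is_code :: "'a set \<Rightarrow> nat \<Rightarrow> 'a set set \<Rightarrow> bool" where
  "is_code V k \<Gamma> \<longleftrightarrow> \<Gamma> \<noteq> {} \<and> \<Gamma> \<subset> ksubsets V k"

(* minimum distance delta(Gamma); infinity if Gamma has only one codeword *)
definition min_dist :: "'a set \<Rightarrow> nat \<Rightarrow> 'a set set \<Rightarrow> enat" where
  "min_dist V k \<Gamma> = (INF p \<in> {(A, B). A \<in> \<Gamma> \<and> B \<in> \<Gamma> \<and> A \<noteq> B}. enat (jdist V k (fst p) (snd p)))"

definition neighbours :: "'a set \<Rightarrow> nat \<Rightarrow> 'a set set \<Rightarrow> 'a set set" where
  "neighbours V k \<Gamma> = {B \<in> ksubsets V k. B \<notin> \<Gamma> \<and> (\<exists>A \<in> \<Gamma>. jdist V k A B = 1)}"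

definition stabilises_code :: "('a \<Rightarrow> 'a) set \<Rightarrow> 'a set set \<Rightarrow> bool" where
  "stabilises_code G \<Gamma> \<longleftrightarrow> (\<forall>g \<in> G. (\<lambda>A. g ` A) ` \<Gamma> = \<Gamma>)"

definition set_transitive :: "('a \<Rightarrow> 'a) set \<Rightarrow> 'a set set \<Rightarrow> bool" where
  "set_transitive G X \<longleftrightarrow> (\<forall>A \<in> X. \<forall>B \<in> X. \<exists>g \<in> G. g ` A = B)"

definition neighbour_transitive :: "'a set \<Rightarrow> nat \<Rightarrow> ('a \<Rightarrow> 'a) set \<Rightarrow> 'a set set \<Rightarrow> bool" where
  "neighbour_transitive V k G \<Gamma> \<longleftrightarrow>
     set_transitive G \<Gamma> \<and> set_transitive G (neighbours V k \<Gamma>)"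

definition incidence_transitive :: "'a set \<Rightarrow> nat \<Rightarrow> ('a \<Rightarrow> 'a) set \<Rightarrow> 'a set set \<Rightarrow> bool" where
  "incidence_transitive V k G \<Gamma> \<longleftrightarrow>
     (let P = {(A, B). A \<in> \<Gamma> \<and> B \<in> neighbours V k \<Gamma> \<and> jdist V k A B = 1}
      in \<forall>p \<in> P. \<forall>q \<in> P. \<exists>g \<in> G. g ` fst p = fst q \<and> g ` snd p = snd q)"

definition strongly_incidence_transitive :: "'a set \<Rightarrow> ('a \<Rightarrow> 'a) set \<Rightarrow> 'a set set \<Rightarrow> bool" where
  "strongly_incidence_transitive V G \<Gamma> \<longleftrightarrow>
     set_transitive G \<Gamma> \<and>
     (\<forall>A \<in> \<Gamma>. \<forall>a \<in> A. \<forall>b \<in> V - A. \<forall>c \<in> A. \<forall>d \<in> V - A.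
        \<exists>g \<in> G. g ` A = A \<and> g a = c \<and> g b = d)"

definition perm_transitive :: "'a set \<Rightarrow> ('a \<Rightarrow> 'a) set \<Rightarrow> bool" where
  "perm_transitive V G \<longleftrightarrow> (\<forall>a \<in> V. \<forall>b \<in> V. \<exists>g \<in> G. g a = b)"

definition primitive :: "'a set \<Rightarrow> ('a \<Rightarrow> 'a) set \<Rightarrow> bool" where
  "primitive V G \<longleftrightarrow> perm_transitive V G \<and>
     (\<forall>B. B \<subseteq> V \<longrightarrow> B \<noteq> {} \<longrightarrow> (\<forall>g \<in> G. g ` B = B \<or> g ` B \<inter> B = {}) \<longrightarrow>
          card B = 1 \<or> B = V)"

definition two_transitive :: "'a set \<Rightarrow> ('a \<Rightarrow> 'a) set \<Rightarrow> bool" where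
  "two_transitive V G \<longleftrightarrow>
     (\<forall>a \<in> V. \<forall>b \<in> V. \<forall>c \<in> V. \<forall>d \<in> V. a \<noteq> b \<longrightarrow> c \<noteq> d \<longrightarrow>
        (\<exists>g \<in> G. g a = c \<and> g b = d))"

end

theory Submission
  imports Defs
begin

text \<open>
  Adjacent vertices of J(v,k) are exactly the exchanges (A - {a}) \<union> {b} with
  a in A and b outside A. If no exchange of a codeword is a codeword (that is, the minimum
  distance is at least 2), the incident pairs of the code are therefore exactly its flags
  (A, a, b), and incidence-transitivity is transitivity on flags, which is strong
  incidence-transitivity. Conversely, a strongly incidence-transitive code containing one
  edge contains every exchange of every codeword, so by connectivity of J(v,k) it would be
  everything. If the minimum distance is at least 3, a neighbour is adjacent to exactly one
  codeword, so an element mapping one exchange of A to another must fix A.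
  For (c), the intersection of the codewords through x is a block of imprimitivity; it is
  proper, hence {x}. So any two points are separated by a codeword, and flag-transitivity
  becomes 2-transitivity.
\<close>

lemma exchange_in_ksubsets:
  assumes "finite V" "A \<in> ksubsets V k" "a \<in> A" "b \<in> V - A"
  shows "insert b (A - {a}) \<in> ksubsets V k"
proof -
  have "finite A" "card A = k" "A \<subseteq> V"
    using assms by (auto simp: ksubsets_def intro: finite_subset)
  moreover have "0 < card A"
    using \<open>finite A\<close> assms(3) card_gt_0_iff by blast
  ultimately show ?thesis
    using assms(3,4) by (auto simp: ksubsets_def card_insert_if)
qed

lemma johnson_edge_exchange:
  assumes "finite V" "A \<in> ksubsets V k" "a \<in> A" "b \<in> V - A"
  shows "(A, insert b (A - {a})) \<in> johnson_edges V k"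
proof -
  have "A \<inter> insert b (A - {a}) = A - {a}"
    using assms(4) by blast
  moreover have "finite A" "card A = k"
    using assms(1,2) by (auto simp: ksubsets_def intro: finite_subset)
  ultimately show ?thesis
    using assms exchange_in_ksubsets by (simp add: johnson_edges_def)
qed

lemma johnson_edges_sym: "(A, B) \<in> johnson_edges V k \<Longrightarrow> (B, A) \<in> johnson_edges V k"
  by (auto simp: johnson_edges_def Int_commute)

lemma johnson_edgeE:
  assumes "finite V" "1 \<le> k" "(A, B) \<in> johnson_edges V k"
  obtains a b where "a \<in> A" "b \<in> V - A" "B = insert b (A - {a})"
proof -
  have k: "A \<subseteq> V" "B \<subseteq> V" "card A = k" "card B = k" "card (A \<inter> B) = k - 1"
    using assms(3) by (auto simp: johnson_edges_def ksubsets_def)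
  have fin: "finite A" "finite B"
    using k assms(1) finite_subset by auto
  have "card (A - B) = 1"
    using k fin assms(2) by (simp add: card_Diff_subset_Int)
  then obtain a where a: "A - B = {a}"
    using card_1_singletonE by blast
  have "card (B - A) = 1"
    using k fin assms(2) by (simp add: card_Diff_subset_Int Int_commute)
  then obtain b where b: "B - A = {b}"
    using card_1_singletonE by blast
  show thesis
    using a b k(2) by (intro that[of a b]) blast+
qed

lemma johnson_edges_relpow_card_diff:
  assumes "finite V" "A \<in> ksubsets V k" "B \<in> ksubsets V k"
  shows "(A, B) \<in> johnson_edges V k ^^ card (A - B)"
  using assms(2)
proof (induction "card (A - B)" arbitrary: A)
  case 0
  have "finite A" "finite B" "card A = k" "card B = k"
    using "0.prems" assms by (auto simp: ksubsets_def intro: finite_subset)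
  moreover have "A \<subseteq> B"
    using "0.hyps" \<open>finite A\<close> by simp
  ultimately have "A = B"
    using card_subset_eq by metis
  then show ?case
    by simp
next
  case (Suc n)
  have fin: "finite A" "finite B" "card A = k" "card B = k" "B \<subseteq> V"
    using Suc.prems assms by (auto simp: ksubsets_def intro: finite_subset)
  obtain a where a: "a \<in> A - B"
    using Suc.hyps(2) by (metis card.empty ex_in_conv nat.distinct(1))
  have "card (B - A) = card (A - B)"
    using fin by (metis card_Diff_subset_Int finite_Int inf_commute)
  then obtain b where b: "b \<in> B - A"
    using Suc.hyps(2) by (metis card.empty ex_in_conv nat.distinct(1))
  define A' where "A' = insert b (A - {a})"
  have edge: "(A, A') \<in> johnson_edges V k"
    unfolding A'_def using a b fin by (intro johnson_edge_exchange[OF assms(1) Suc.prems]) auto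
  then have A': "A' \<in> ksubsets V k"
    by (simp add: johnson_edges_def)
  have "A' - B = (A - B) - {a}"
    using a b by (auto simp: A'_def)
  then have "n = card (A' - B)"
    using Suc.hyps(2) a fin by simp
  then have "(A', B) \<in> johnson_edges V k ^^ card (A' - B)"
    by (rule Suc.hyps(1)[OF _ A'])
  then show ?case
    using edge Suc.hyps(2) \<open>n = card (A' - B)\<close> by (metis relpow_Suc_I2)
qed

lemma jdist_relpow:
  assumes "finite V" "A \<in> ksubsets V k" "B \<in> ksubsets V k"
  shows "(A, B) \<in> johnson_edges V k ^^ jdist V k A B"
  unfolding jdist_def using johnson_edges_relpow_card_diff[OF assms] by (rule LeastI)

lemma jdist_le_relpow: "(A, B) \<in> johnson_edges V k ^^ n \<Longrightarrow> jdist V k A B \<le> n"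
  unfolding jdist_def by (rule Least_le)

lemma jdist_eq_0_iff:
  assumes "finite V" "A \<in> ksubsets V k" "B \<in> ksubsets V k"
  shows "jdist V k A B = 0 \<longleftrightarrow> A = B"
  using jdist_relpow[OF assms] jdist_le_relpow[where n = 0] by auto

lemma jdist_eq_1_iff:
  assumes "finite V" "1 \<le> k" "A \<in> ksubsets V k" "B \<in> ksubsets V k"
  shows "jdist V k A B = 1 \<longleftrightarrow> (A, B) \<in> johnson_edges V k"
proof
  assume "jdist V k A B = 1"
  then show "(A, B) \<in> johnson_edges V k"
    using jdist_relpow[OF assms(1,3,4)] by simp
next
  assume edge: "(A, B) \<in> johnson_edges V k"
  have "finite A" "card A = k"
    using assms(1,3) by (auto simp: ksubsets_def intro: finite_subset)
  then have "A \<noteq> B"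
    using edge assms(2) by (auto simp: johnson_edges_def)
  moreover have "jdist V k A B \<le> 1"
    by (rule jdist_le_relpow) (use edge in simp)
  ultimately show "jdist V k A B = 1"
    using jdist_eq_0_iff[OF assms(1,3,4)] by simp
qed

lemma image_exchange:
  assumes "inj_on g V" "A \<subseteq> V" "a \<in> A" "b \<in> V"
  shows "g ` insert b (A - {a}) = insert (g b) (g ` A - {g a})"
  using inj_on_image_set_diff[OF assms(1), of A "{a}"] assms by auto

lemma ksubsets_image:
  assumes "inj_on g V" "g ` V \<subseteq> V" "A \<in> ksubsets V k"
  shows "g ` A \<in> ksubsets V k"
  using assms card_image[OF inj_on_subset[OF assms(1)]] by (auto simp: ksubsets_def)

lemma johnson_edge_image:
  assumes "inj_on g V" "g ` V \<subseteq> V" "(A, B) \<in> johnson_edges V k"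
  shows "(g ` A, g ` B) \<in> johnson_edges V k"
proof -
  have AB: "A \<in> ksubsets V k" "B \<in> ksubsets V k" "A \<subseteq> V" "B \<subseteq> V"
    using assms(3) by (auto simp: johnson_edges_def ksubsets_def)
  have "card (g ` A \<inter> g ` B) = card (g ` (A \<inter> B))"
    using inj_on_image_Int[OF assms(1) AB(3,4)] by simp
  also have "\<dots> = card (A \<inter> B)"
    using AB(3) by (intro card_image inj_on_subset[OF assms(1)]) auto
  finally show ?thesis
    using ksubsets_image[OF assms(1,2)] AB assms(3) by (simp add: johnson_edges_def)
qed

lemma exchange_image_eq:
  assumes "inj_on g V" "g ` A = A" "A \<subseteq> V" "a \<in> A" "b \<in> V - A" "c \<in> A" "d \<in> V - A"
    and "g ` insert b (A - {a}) = insert d (A - {c})"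
  shows "g a = c \<and> g b = d"
proof -
  have eq: "insert (g b) (A - {g a}) = insert d (A - {c})"
    using image_exchange[OF assms(1,3,4)] assms(2,5,8) by simp
  have gb: "g b \<notin> A"
    using assms(2,3,5) inj_on_image_mem_iff[OF assms(1)] by blast
  have "c \<notin> insert (g b) (A - {g a})"
    using eq assms(6,7) by auto
  moreover have "g b \<in> insert d (A - {c})"
    using eq by blast
  ultimately show ?thesis
    using gb assms(6) by auto
qed

lemma min_dist_le_jdist:
  "A \<in> \<Gamma> \<Longrightarrow> B \<in> \<Gamma> \<Longrightarrow> A \<noteq> B \<Longrightarrow> min_dist V k \<Gamma> \<le> enat (jdist V k A B)"
  unfolding min_dist_def by (rule INF_lower2[of "(A, B)"]) auto

lemma min_dist_geI:
  "(\<And>A B. A \<in> \<Gamma> \<Longrightarrow> B \<in> \<Gamma> \<Longrightarrow> A \<noteq> B \<Longrightarrow> n \<le> jdist V k A B) \<Longrightarrow> enat n \<le> min_dist V k \<Gamma>"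
  unfolding min_dist_def by (rule INF_greatest) (auto split: prod.splits)

lemma codewords_eq_if_jdist_less:
  assumes "enat n \<le> min_dist V k \<Gamma>" "A \<in> \<Gamma>" "B \<in> \<Gamma>" "jdist V k A B < n"
  shows "A = B"
  using min_dist_le_jdist[of A \<Gamma> B V k] assms by (metis enat_ord_simps(2) order.trans not_le)

lemma BijGroup_subgroup_bij: "subgroup G (BijGroup V) \<Longrightarrow> g \<in> G \<Longrightarrow> bij_betw g V V"
  using subgroup.subset by (fastforce simp: BijGroup_def Bij_def)

lemma BijGroup_subgroup_comp:
  assumes "subgroup G (BijGroup V)" "g \<in> G" "h \<in> G"
  shows "\<exists>f \<in> G. \<forall>x \<in> V. f x = h (g x)"
proof
  have "g \<in> Bij V" "h \<in> Bij V"
    using assms subgroup.subset by (fastforce simp: BijGroup_def)+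
  then have "h \<otimes>\<^bsub>BijGroup V\<^esub> g = compose V h g"
    by (simp add: BijGroup_def)
  then show "compose V h g \<in> G"
    using subgroup.m_closed[OF assms(1,3,2)] by simp
qed (simp add: compose_def)

lemma strongly_incidence_transitive_transD:
  "strongly_incidence_transitive V G \<Gamma> \<Longrightarrow> A \<in> \<Gamma> \<Longrightarrow> B \<in> \<Gamma> \<Longrightarrow> \<exists>g \<in> G. g ` A = B"
  unfolding strongly_incidence_transitive_def set_transitive_def by blast

lemma strongly_incidence_transitive_stabD:
  "strongly_incidence_transitive V G \<Gamma> \<Longrightarrow> A \<in> \<Gamma> \<Longrightarrow> a \<in> A \<Longrightarrow> b \<in> V - A \<Longrightarrow> c \<in> A \<Longrightarrow> d \<in> V - A
    \<Longrightarrow> \<exists>g \<in> G. g ` A = A \<and> g a = c \<and> g b = d"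
  unfolding strongly_incidence_transitive_def by blast

definition code_block :: "'a set \<Rightarrow> 'a set set \<Rightarrow> 'a \<Rightarrow> 'a set" where
  "code_block V \<Gamma> x = {y \<in> V. \<forall>A \<in> \<Gamma>. x \<in> A \<longrightarrow> y \<in> A}"

locale johnson_code =
  fixes V :: "'a set" and k :: nat and \<Gamma> :: "'a set set" and G :: "('a \<Rightarrow> 'a) set"
  assumes finite_V: "finite V" and k_pos: "1 \<le> k" and k_less: "k < card V"
    and code: "is_code V k \<Gamma>"
    and subgroup_G: "subgroup G (BijGroup V)" and stabilises: "stabilises_code G \<Gamma>"
begin

lemma codeword_ksubset: "A \<in> \<Gamma> \<Longrightarrow> A \<in> ksubsets V k"
  using code by (auto simp: is_code_def)

lemma codeword_subset: "A \<in> \<Gamma> \<Longrightarrow> A \<subseteq> V"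
  using codeword_ksubset by (simp add: ksubsets_def)

lemma ksubset_flag_exists:
  assumes "A \<in> ksubsets V k"
  obtains a b where "a \<in> A" "b \<in> V - A"
proof -
  have "card A = k" "A \<subseteq> V"
    using assms by (auto simp: ksubsets_def)
  moreover have "A \<noteq> {}"
    using \<open>card A = k\<close> k_pos by auto
  moreover have "\<not> V \<subseteq> A"
    using \<open>card A = k\<close> k_less card_mono[OF finite_V, of A] \<open>A \<subseteq> V\<close> by auto
  ultimately show thesis
    using that by blast
qed

lemma inj_on_G: "g \<in> G \<Longrightarrow> inj_on g V"
  using BijGroup_subgroup_bij[OF subgroup_G] by (simp add: bij_betw_def)

lemma image_G: "g \<in> G \<Longrightarrow> g ` V = V"
  using BijGroup_subgroup_bij[OF subgroup_G] by (simp add: bij_betw_def)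

lemma G_mem_iff: "g \<in> G \<Longrightarrow> A \<subseteq> V \<Longrightarrow> x \<in> V \<Longrightarrow> g x \<in> g ` A \<longleftrightarrow> x \<in> A"
  using inj_on_G inj_on_image_mem_iff by metis

lemma codeword_image: "g \<in> G \<Longrightarrow> A \<in> \<Gamma> \<Longrightarrow> g ` A \<in> \<Gamma>"
  using stabilises by (auto simp: stabilises_code_def)

lemma jdist_eq_1_iff_edge:
  "A \<in> ksubsets V k \<Longrightarrow> B \<in> ksubsets V k \<Longrightarrow> jdist V k A B = 1 \<longleftrightarrow> (A, B) \<in> johnson_edges V k"
  using jdist_eq_1_iff[OF finite_V k_pos] .

lemma sit_flag_transitive:
  assumes sit: "strongly_incidence_transitive V G \<Gamma>"
    and A: "A \<in> \<Gamma>" "a \<in> A" "b \<in> V - A" and A': "A' \<in> \<Gamma>" "a' \<in> A'" "b' \<in> V - A'"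
  obtains f where "f \<in> G" "f ` A = A'" "f a = a'" "f b = b'"
proof -
  obtain g where g: "g \<in> G" "g ` A = A'"
    using strongly_incidence_transitive_transD[OF sit A(1) A'(1)] by blast
  have AV: "A \<subseteq> V" "a \<in> V" "b \<in> V"
    using codeword_subset[OF A(1)] A(2,3) by auto
  have ga: "g a \<in> A'"
    using g(2) A(2) by blast
  have gb: "g b \<in> V - A'"
    using G_mem_iff[OF g(1) AV(1,3)] image_G[OF g(1)] g(2) A(3) by blast
  obtain h where h: "h \<in> G" "h ` A' = A'" "h (g a) = a'" "h (g b) = b'"
    using strongly_incidence_transitive_stabD[OF sit A'(1) ga gb A'(2,3)] by blast
  obtain f where f: "f \<in> G" "\<And>x. x \<in> V \<Longrightarrow> f x = h (g x)"
    using BijGroup_subgroup_comp[OF subgroup_G g(1) h(1)] by blast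
  have "f ` A = (\<lambda>x. h (g x)) ` A"
    using f(2) AV(1) by (intro image_cong) auto
  also have "\<dots> = h ` g ` A"
    by (simp add: image_image)
  also have "\<dots> = A'"
    using g(2) h(2) by simp
  finally show thesis
    using that[OF f(1)] f(2)[OF AV(2)] f(2)[OF AV(3)] h(3,4) by simp
qed

lemma sit_exchanges_in_code:
  assumes sit: "strongly_incidence_transitive V G \<Gamma>"
    and A: "A \<in> \<Gamma>" "a \<in> A" "b \<in> V - A" "insert b (A - {a}) \<in> \<Gamma>"
    and "c \<in> A" "d \<in> V - A"
  shows "insert d (A - {c}) \<in> \<Gamma>"
proof -
  obtain g where g: "g \<in> G" "g ` A = A" "g a = c" "g b = d"
    using strongly_incidence_transitive_stabD[OF sit A(1-3) assms(6,7)] by blast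
  have "g ` insert b (A - {a}) = insert d (A - {c})"
    using image_exchange[OF inj_on_G[OF g(1)] codeword_subset[OF A(1)] A(2) DiffD1[OF A(3)]] g
    by simp
  then show ?thesis
    using codeword_image[OF g(1) A(4)] by simp
qed

text \<open>The code would be closed under adjacency, and J(v,k) is connected.\<close>

lemma sit_no_adjacent_codewords:
  assumes sit: "strongly_incidence_transitive V G \<Gamma>"
    and A: "A \<in> \<Gamma>" and B: "B \<in> \<Gamma>" and edge: "(A, B) \<in> johnson_edges V k"
  shows False
proof -
  have closed: "johnson_edges V k `` \<Gamma> \<subseteq> \<Gamma>"
  proof
    fix D assume "D \<in> johnson_edges V k `` \<Gamma>"
    then obtain C where C: "C \<in> \<Gamma>" and CD: "(C, D) \<in> johnson_edges V k"
      by blast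
    obtain g where g: "g \<in> G" "g ` A = C"
      using strongly_incidence_transitive_transD[OF sit A C] by blast
    have "(C, g ` B) \<in> johnson_edges V k"
      using johnson_edge_image[OF inj_on_G[OF g(1)] _ edge] image_G g by simp
    then obtain a b where ab: "a \<in> C" "b \<in> V - C" "g ` B = insert b (C - {a})"
      using johnson_edgeE[OF finite_V k_pos] by blast
    obtain c d where "c \<in> C" "d \<in> V - C" "D = insert d (C - {c})"
      using johnson_edgeE[OF finite_V k_pos CD] by blast
    then show "D \<in> \<Gamma>"
      using sit_exchanges_in_code[OF sit C ab(1,2)] ab(3) codeword_image[OF g(1) B] by simp
  qed
  have "ksubsets V k \<subseteq> (johnson_edges V k)\<^sup>* `` \<Gamma>"
    using A codeword_ksubset johnson_edges_relpow_card_diff[OF finite_V] relpow_imp_rtrancl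
    by blast
  then have "ksubsets V k \<subseteq> \<Gamma>"
    using Image_closed_trancl[OF closed] by simp
  then show False
    using code by (auto simp: is_code_def)
qed

lemma sit_min_dist:
  assumes sit: "strongly_incidence_transitive V G \<Gamma>"
  shows "2 \<le> min_dist V k \<Gamma>"
proof -
  have "enat 2 \<le> min_dist V k \<Gamma>"
  proof (rule min_dist_geI)
    fix A B assume A: "A \<in> \<Gamma>" and B: "B \<in> \<Gamma>" and "A \<noteq> B"
    then have "jdist V k A B \<noteq> 0" "jdist V k A B \<noteq> 1"
      using jdist_eq_0_iff[OF finite_V] jdist_eq_1_iff_edge codeword_ksubset
        sit_no_adjacent_codewords[OF sit A B] by auto
    then show "2 \<le> jdist V k A B"
      by simp
  qed
  then show ?thesis
    by (simp add: numeral_eq_enat)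
qed

lemma incidence_transitiveI:
  assumes "\<And>A B A' B'. A \<in> \<Gamma> \<Longrightarrow> B \<in> neighbours V k \<Gamma> \<Longrightarrow> jdist V k A B = 1 \<Longrightarrow>
      A' \<in> \<Gamma> \<Longrightarrow> B' \<in> neighbours V k \<Gamma> \<Longrightarrow> jdist V k A' B' = 1 \<Longrightarrow>
      \<exists>g \<in> G. g ` A = A' \<and> g ` B = B'"
  shows "incidence_transitive V k G \<Gamma>"
  using assms by (auto simp: incidence_transitive_def)

lemma incidence_transitiveD:
  assumes "incidence_transitive V k G \<Gamma>"
    and "A \<in> \<Gamma>" "B \<in> neighbours V k \<Gamma>" "jdist V k A B = 1"
    and "A' \<in> \<Gamma>" "B' \<in> neighbours V k \<Gamma>" "jdist V k A' B' = 1"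
  shows "\<exists>g \<in> G. g ` A = A' \<and> g ` B = B'"
  using assms unfolding incidence_transitive_def Let_def by fastforce

lemma neighbour_exchange:
  assumes "A \<in> \<Gamma>" "B \<in> neighbours V k \<Gamma>" "jdist V k A B = 1"
  obtains a b where "a \<in> A" "b \<in> V - A" "B = insert b (A - {a})"
  using assms johnson_edgeE[OF finite_V k_pos] codeword_ksubset jdist_eq_1_iff_edge
  by (metis (no_types, lifting) mem_Collect_eq neighbours_def)

lemma sit_incidence_transitive:
  assumes sit: "strongly_incidence_transitive V G \<Gamma>"
  shows "incidence_transitive V k G \<Gamma>"
proof (rule incidence_transitiveI)
  fix A B A' B'
  assume A: "A \<in> \<Gamma>" "B \<in> neighbours V k \<Gamma>" "jdist V k A B = 1"
    and A': "A' \<in> \<Gamma>" "B' \<in> neighbours V k \<Gamma>" "jdist V k A' B' = 1"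
  obtain a b where ab: "a \<in> A" "b \<in> V - A" "B = insert b (A - {a})"
    using neighbour_exchange[OF A] .
  obtain a' b' where ab': "a' \<in> A'" "b' \<in> V - A'" "B' = insert b' (A' - {a'})"
    using neighbour_exchange[OF A'] .
  obtain g where g: "g \<in> G" "g ` A = A'" "g a = a'" "g b = b'"
    using sit_flag_transitive[OF sit A(1) ab(1,2) A'(1) ab'(1,2)] .
  have "g ` B = B'"
    using image_exchange[OF inj_on_G[OF g(1)] codeword_subset[OF A(1)] ab(1) DiffD1[OF ab(2)]]
      ab(3) ab'(3) g by simp
  then show "\<exists>g \<in> G. g ` A = A' \<and> g ` B = B'"
    using g by blast
qed

lemma exchange_in_neighbours:
  assumes md: "2 \<le> min_dist V k \<Gamma>" and A: "A \<in> \<Gamma>" "a \<in> A" "b \<in> V - A"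
  shows "insert b (A - {a}) \<in> neighbours V k \<Gamma>" "jdist V k A (insert b (A - {a})) = 1"
proof -
  have AK: "A \<in> ksubsets V k"
    using codeword_ksubset[OF A(1)] .
  show dist: "jdist V k A (insert b (A - {a})) = 1"
    using jdist_eq_1_iff_edge AK exchange_in_ksubsets[OF finite_V AK A(2,3)]
      johnson_edge_exchange[OF finite_V AK A(2,3)] by blast
  have "insert b (A - {a}) \<notin> \<Gamma>"
  proof
    assume B: "insert b (A - {a}) \<in> \<Gamma>"
    have "enat 2 \<le> min_dist V k \<Gamma>"
      using md by (simp add: numeral_eq_enat)
    then have "A = insert b (A - {a})"
      by (rule codewords_eq_if_jdist_less[OF _ A(1) B]) (simp add: dist)
    then show False
      using A(3) by blast
  qed
  then show "insert b (A - {a}) \<in> neighbours V k \<Gamma>"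
    using A(1) dist exchange_in_ksubsets[OF finite_V AK A(2,3)] by (auto simp: neighbours_def)
qed

lemma incidence_transitive_sit:
  assumes it: "incidence_transitive V k G \<Gamma>" and md: "2 \<le> min_dist V k \<Gamma>"
  shows "strongly_incidence_transitive V G \<Gamma>"
  unfolding strongly_incidence_transitive_def set_transitive_def
proof (intro conjI ballI)
  fix A A' assume A: "A \<in> \<Gamma>" and A': "A' \<in> \<Gamma>"
  obtain a b where ab: "a \<in> A" "b \<in> V - A"
    using ksubset_flag_exists[OF codeword_ksubset[OF A]] .
  obtain a' b' where ab': "a' \<in> A'" "b' \<in> V - A'"
    using ksubset_flag_exists[OF codeword_ksubset[OF A']] .
  show "\<exists>g \<in> G. g ` A = A'"
    using incidence_transitiveD[OF it A exchange_in_neighbours[OF md A ab]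
        A' exchange_in_neighbours[OF md A' ab']] by blast
next
  fix A a b c d assume A: "A \<in> \<Gamma>" "a \<in> A" "b \<in> V - A" and cd: "c \<in> A" "d \<in> V - A"
  obtain g where g: "g \<in> G" "g ` A = A" "g ` insert b (A - {a}) = insert d (A - {c})"
    using incidence_transitiveD[OF it A(1) exchange_in_neighbours[OF md A]
        A(1) exchange_in_neighbours[OF md A(1) cd]] by blast
  then show "\<exists>g \<in> G. g ` A = A \<and> g a = c \<and> g b = d"
    using exchange_image_eq[OF inj_on_G[OF g(1)] g(2) codeword_subset[OF A(1)] A(2,3) cd g(3)]
    by blast
qed

lemma neighbour_transitive_sit:
  assumes md: "3 \<le> min_dist V k \<Gamma>" and nt: "neighbour_transitive V k G \<Gamma>"
  shows "strongly_incidence_transitive V G \<Gamma>"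
  unfolding strongly_incidence_transitive_def
proof (intro conjI ballI)
  show "set_transitive G \<Gamma>"
    using nt by (simp add: neighbour_transitive_def)
next
  fix A a b c d assume A: "A \<in> \<Gamma>" "a \<in> A" "b \<in> V - A" and cd: "c \<in> A" "d \<in> V - A"
  have md2: "2 \<le> min_dist V k \<Gamma>"
    using md by (rule order_trans[rotated]) simp
  obtain g where g: "g \<in> G" "g ` insert b (A - {a}) = insert d (A - {c})"
    using nt exchange_in_neighbours(1)[OF md2 A] exchange_in_neighbours(1)[OF md2 A(1) cd]
    unfolding neighbour_transitive_def set_transitive_def by blast
  have AK: "A \<in> ksubsets V k"
    using codeword_ksubset[OF A(1)] .
  have "(g ` A, insert d (A - {c})) \<in> johnson_edges V k"
    using johnson_edge_image[OF inj_on_G[OF g(1)] _ johnson_edge_exchange[OF finite_V AK A(2,3)]]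
      image_G[OF g(1)] g(2) by simp
  moreover have "(insert d (A - {c}), A) \<in> johnson_edges V k"
    using johnson_edges_sym johnson_edge_exchange[OF finite_V AK cd] by blast
  ultimately have "(g ` A, A) \<in> johnson_edges V k ^^ 2"
    by (auto simp: numeral_2_eq_2 relpow_Suc_I2)
  then have "jdist V k (g ` A) A < 3"
    using jdist_le_relpow by fastforce
  moreover have "enat 3 \<le> min_dist V k \<Gamma>"
    using md by (simp add: numeral_eq_enat)
  ultimately have "g ` A = A"
    using codewords_eq_if_jdist_less codeword_image[OF g(1) A(1)] A(1) by blast
  then show "\<exists>g \<in> G. g ` A = A \<and> g a = c \<and> g b = d"
    using exchange_image_eq[OF inj_on_G[OF g(1)] _ codeword_subset[OF A(1)] A(2,3) cd g(2)] g(1)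
    by blast
qed

lemma code_block_subset: "code_block V \<Gamma> x \<subseteq> V"
  by (auto simp: code_block_def)

lemma code_block_image:
  assumes g: "g \<in> G" and x: "x \<in> V"
  shows "g ` code_block V \<Gamma> x = code_block V \<Gamma> (g x)"
proof -
  have \<Gamma>: "(\<lambda>A. g ` A) ` \<Gamma> = \<Gamma>"
    using stabilises g by (simp add: stabilises_code_def)
  have "y \<in> code_block V \<Gamma> x \<longleftrightarrow> g y \<in> code_block V \<Gamma> (g x)" if y: "y \<in> V" for y
  proof -
    have "(\<forall>A \<in> \<Gamma>. x \<in> A \<longrightarrow> y \<in> A) \<longleftrightarrow> (\<forall>A \<in> \<Gamma>. g x \<in> g ` A \<longrightarrow> g y \<in> g ` A)"
      using G_mem_iff[OF g codeword_subset] x y by auto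
    also have "\<dots> \<longleftrightarrow> (\<forall>A \<in> (\<lambda>A. g ` A) ` \<Gamma>. g x \<in> A \<longrightarrow> g y \<in> A)"
      by simp
    also have "\<dots> \<longleftrightarrow> (\<forall>A \<in> \<Gamma>. g x \<in> A \<longrightarrow> g y \<in> A)"
      by (simp only: \<Gamma>)
    finally show ?thesis
      using y image_G[OF g] by (auto simp: code_block_def)
  qed
  moreover have "code_block V \<Gamma> (g x) \<subseteq> g ` V"
    using image_G[OF g] code_block_subset by simp
  ultimately show ?thesis
    using code_block_subset by blast
qed

lemma code_block_eq:
  assumes tr: "perm_transitive V G" and x: "x \<in> V" and y: "y \<in> code_block V \<Gamma> x"
  shows "code_block V \<Gamma> y = code_block V \<Gamma> x"
proof -
  obtain g where g: "g \<in> G" "g x = y"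
    using tr x y code_block_subset unfolding perm_transitive_def by blast
  have "card (code_block V \<Gamma> y) = card (g ` code_block V \<Gamma> x)"
    using code_block_image[OF g(1) x] g(2) by simp
  also have "\<dots> = card (code_block V \<Gamma> x)"
    by (rule card_image[OF inj_on_subset[OF inj_on_G[OF g(1)] code_block_subset]])
  finally have card: "card (code_block V \<Gamma> y) = card (code_block V \<Gamma> x)" .
  have sub: "code_block V \<Gamma> y \<subseteq> code_block V \<Gamma> x"
    using y by (auto simp: code_block_def)
  show ?thesis
    using card_subset_eq[OF finite_subset[OF code_block_subset finite_V] sub card] .
qed

lemma primitive_code_block:
  assumes pr: "primitive V G" and x: "x \<in> V"
  shows "code_block V \<Gamma> x = {x}"
proof -
  have tr: "perm_transitive V G"
    using pr by (simp add: primitive_def)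
  have block: "g ` code_block V \<Gamma> x = code_block V \<Gamma> x \<or> g ` code_block V \<Gamma> x \<inter> code_block V \<Gamma> x = {}"
    if g: "g \<in> G" for g
  proof (rule disjCI)
    assume "g ` code_block V \<Gamma> x \<inter> code_block V \<Gamma> x \<noteq> {}"
    then obtain z where z: "z \<in> code_block V \<Gamma> (g x)" "z \<in> code_block V \<Gamma> x"
      using code_block_image[OF g x] by blast
    have "g x \<in> V"
      using x image_G[OF g] by blast
    then have "code_block V \<Gamma> (g x) = code_block V \<Gamma> x"
      using code_block_eq[OF tr _ z(1)] code_block_eq[OF tr x z(2)] by simp
    then show "g ` code_block V \<Gamma> x = code_block V \<Gamma> x"
      using code_block_image[OF g x] by simp
  qed
  obtain A0 where A0: "A0 \<in> \<Gamma>"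
    using code by (auto simp: is_code_def)
  obtain a0 b where ab: "a0 \<in> A0" "b \<in> V - A0"
    using ksubset_flag_exists[OF codeword_ksubset[OF A0]] .
  obtain g where g: "g \<in> G" "g a0 = x"
    using tr x ab(1) codeword_subset[OF A0] unfolding perm_transitive_def by blast
  have "g b \<notin> g ` A0" "x \<in> g ` A0"
    using G_mem_iff[OF g(1) codeword_subset[OF A0]] ab g(2) by auto
  then have "g b \<notin> code_block V \<Gamma> x"
    using codeword_image[OF g(1) A0] unfolding code_block_def by blast
  moreover have "g b \<in> V"
    using ab(2) image_G[OF g(1)] by blast
  moreover have x_in: "x \<in> code_block V \<Gamma> x"
    using x by (simp add: code_block_def)
  ultimately have "code_block V \<Gamma> x \<noteq> V" "code_block V \<Gamma> x \<noteq> {}"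
    by blast+
  moreover have "\<forall>g \<in> G. g ` code_block V \<Gamma> x = code_block V \<Gamma> x \<or>
      g ` code_block V \<Gamma> x \<inter> code_block V \<Gamma> x = {}"
    using block by blast
  ultimately have "card (code_block V \<Gamma> x) = 1"
    using pr code_block_subset[of x] unfolding primitive_def by blast
  then obtain z where "code_block V \<Gamma> x = {z}"
    by (rule card_1_singletonE)
  then show ?thesis
    using x_in by simp
qed

lemma sit_primitive_two_transitive:
  assumes pr: "primitive V G" and sit: "strongly_incidence_transitive V G \<Gamma>"
  shows "two_transitive V G"
  unfolding two_transitive_def
proof (intro ballI impI)
  have separate: "\<exists>A \<in> \<Gamma>. x \<in> A \<and> y \<in> V - A" if "x \<in> V" "y \<in> V" "x \<noteq> y" for x y
  proof -
    have "y \<notin> code_block V \<Gamma> x"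
      using primitive_code_block[OF pr \<open>x \<in> V\<close>] \<open>x \<noteq> y\<close> by simp
    then show ?thesis
      using \<open>y \<in> V\<close> by (auto simp: code_block_def)
  qed
  fix a b c d assume "a \<in> V" "b \<in> V" "c \<in> V" "d \<in> V" "a \<noteq> b" "c \<noteq> d"
  then obtain A A' where "A \<in> \<Gamma>" "a \<in> A" "b \<in> V - A" "A' \<in> \<Gamma>" "c \<in> A'" "d \<in> V - A'"
    using separate by meson
  then obtain g where "g \<in> G" "g a = c" "g b = d"
    by (rule sit_flag_transitive[OF sit])
  then show "\<exists>g \<in> G. g a = c \<and> g b = d"
    by blast
qed

end

theorem theorem1p3:
  fixes V :: "'a set" and k :: nat and \<Gamma> :: "'a set set" and G :: "('a \<Rightarrow> 'a) set"
  assumes "finite V" and "2 \<le> k" and "k + 2 \<le> card V"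
    and "is_code V k \<Gamma>"
    and "subgroup G (BijGroup V)" and "stabilises_code G \<Gamma>"
  shows "(strongly_incidence_transitive V G \<Gamma> \<longleftrightarrow>
              incidence_transitive V k G \<Gamma> \<and> min_dist V k \<Gamma> \<ge> 2)
         \<and> (min_dist V k \<Gamma> \<ge> 3 \<longrightarrow> neighbour_transitive V k G \<Gamma> \<longrightarrow>
              strongly_incidence_transitive V G \<Gamma>)
         \<and> (primitive V G \<longrightarrow> strongly_incidence_transitive V G \<Gamma> \<longrightarrow> two_transitive V G)"
proof -
  interpret johnson_code V k \<Gamma> G
    using assms by (simp add: johnson_code_def)
  show ?thesis
    using sit_min_dist sit_incidence_transitive incidence_transitive_sit
      neighbour_transitive_sit sit_primitive_two_transitive by blast
qed

end
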